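(* For $\omega\in\mathbb{T}$ and $\upsilon\in\operatorname{Aut}\mathbb{D}$, written $\upsilon(\lambda)=\eta\frac{\lambda-\alpha}{1-\bar\alpha\lambda}$ with $\eta\in\mathbb{T}$, $\alpha\in\mathbb{D}$, define $$f_{\omega\upsilon}(a,s,p)=\left(\frac{\omega\eta(1-|\alpha|^2)a}{1-\bar\alpha s+\bar\alpha^2p},\ \tau_\upsilon(s,p)\right),$$ where $\tau_\upsilon(\lambda_1+\lambda_2,\lambda_1\lambda_2)=(\upsilon(\lambda_1)+\upsilon(\lambda_2),\upsilon(\lambda_1)\upsilon(\lambda_2))$ for $\lambda_1,\lambda_2\in\mathbb{D}$; explicitly $$f_{\omega\upsilon}(a,s,p)=\frac{\eta}{1-\bar\alpha s+\bar\alpha^2p}\Big(\omega(1-|\alpha|^2)a,\ -2\alpha+(1+|\alpha|^2)s-2\bar\alpha p,\ \eta(\alpha^2-\alpha s+p)\Big).$$ Then each $f_{\omega\upsilon}$ is an automorphism of $\mathcal{P}$ (a bijective holomorphic self-map with holomorphic inverse) which extends analytically to a neighbourhood of $\overline{\mathcal{P}}$; for all $\omega_1,\omega_2\in\mathbb{T}$ and $\upsilon_1,\upsilon_2\in\operatorname{Aut}\mathbb{D}$, $f_{\omega_1\upsilon_1}\circ f_{\omega_2\upsilon_2}=f_{(\omega_1\omega_2)(\upsilon_1\circ\upsilon_2)}$, and $(f_{\omega\upsilon})^{-1}=f_{\bar\omega\upsilon^{-1}}$. Consequently $\{f_{\omega\upsilon}:\omega\in\mathbb{T},\upsilon\in\operatorname{Aut}\mathbb{D}\}$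 is a group of automorphisms of $\mathcal{P}$ under composition.
   Context: $\mathbb{D}$ is the open unit disc, $\mathbb{T}$ the unit circle, $\operatorname{Aut}\mathbb{D}$ the group of Möbius automorphisms of $\mathbb{D}$. $\mathbb{B}$ is the open unit ball of $\mathbb{C}^{2\times 2}$ (operator norm), $\pi(A)=(a_{21},\operatorname{tr}A,\det A)$, $\mathcal{P}=\pi(\mathbb{B})$, $\overline{\mathcal{P}}$ its closure. Every $(s,p)$ with $(a,s,p)\in\mathcal{P}$ is of the form $(\lambda_1+\lambda_2,\lambda_1\lambda_2)$ with $\lambda_1,\lambda_2\in\mathbb{D}$. *)

theory Defs
  imports "HOL-Analysis.Analysis"
begin

type_synonym c3 = "complex \<times> complex \<times> complex"

definition smul3 :: "complex \<Rightarrow> c3 \<Rightarrow> c3" where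
  "smul3 c v = (c * fst v, c * fst (snd v), c * snd (snd v))"

definition holo3_on :: "c3 set \<Rightarrow> (c3 \<Rightarrow> c3) \<Rightarrow> bool" where
  "holo3_on S f \<longleftrightarrow> (\<forall>x\<in>S. \<exists>D. (f has_derivative D) (at x) \<and>
                          (\<forall>c v. D (smul3 c v) = smul3 c (D v)))"

definition matball :: "(complex^2^2) set" where
  "matball = {A. onorm (\<lambda>x::complex^2. A *v x) < 1}"

definition piA :: "complex^2^2 \<Rightarrow> c3" where
  "piA A = (A$2$1, A$1$1 + A$2$2, det A)"

definition pentablock :: "c3 set" where
  "pentablock = piA ` matball"

definition moeb :: "complex \<Rightarrow> complex \<Rightarrow> complex \<Rightarrow> complex" where
  "moeb \<eta> \<alpha> z = \<eta> * (z - \<alpha>) / (1 - cnj \<alpha> * z)"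

definition autD_param :: "complex \<Rightarrow> complex \<Rightarrow> bool" where
  "autD_param \<eta> \<alpha> \<longleftrightarrow> norm \<eta> = 1 \<and> norm \<alpha> < 1"

text \<open>f_{omega upsilon} where upsilon = moeb eta alpha (explicit formula of the paper).\<close>
definition fmap :: "complex \<Rightarrow> complex \<Rightarrow> complex \<Rightarrow> c3 \<Rightarrow> c3" where
  "fmap \<omega> \<eta> \<alpha> (x::c3) = (let a = fst x; s = fst (snd x); p = snd (snd x);
      d = 1 - cnj \<alpha> * s + (cnj \<alpha>)^2 * p in
      (\<eta> / d * (\<omega> * (1 - complex_of_real ((norm \<alpha>)^2)) * a),
       \<eta> / d * (- 2 * \<alpha> + (1 + complex_of_real ((norm \<alpha>)^2)) * s - 2 * cnj \<alpha> * p),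
       \<eta> / d * (\<eta> * (\<alpha>^2 - \<alpha> * s + p))))"

definition is_aut3 :: "c3 set \<Rightarrow> (c3 \<Rightarrow> c3) \<Rightarrow> bool" where
  "is_aut3 P f \<longleftrightarrow> bij_betw f P P \<and> holo3_on P f \<and> holo3_on P (inv_into P f)"

end

theory Submission
  imports Defs
begin

(* Proof idea.  (1) A 2x2 matrix A = [a b; c d] lies in the open operator-norm ball B
   iff  |a|^2+|b|^2+|c|^2+|d|^2 < 1 + |det A|^2  and  |det A| < 1  (a condition we call
   "contractive").  Hence P consists of the points (c, a+d, ad-bc) of contractive
   matrices, and P is open, since near a point of P the matrix can be reconstructed
   continuously from (c, s, p) by solving a quadratic for the diagonal.
   (2) Every point of P is (x, l1+l2, l1*l2) with l1, l2 in the disc (eigenvalues).  In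
   these coordinates f_{omega upsilon} acts by l_i |-> upsilon(l_i) and multiplies x by
   an explicit factor, from which the composition law f_{w1 u1} o f_{w2 u2} =
   f_{(w1 w2)(u1 o u2)} follows by Moebius algebra; with u2 = u1^{-1} it gives the inverse.
   (3) f_{omega upsilon} maps P into P: it is induced by an explicit matrix map that
   preserves contractivity, via a sum-of-squares identity.
   (4) The common denominator 1 - conj(alpha) s + conj(alpha)^2 p is bounded below on P
   by (1-|alpha|)^2, so f_{omega upsilon} is holomorphic on an open set containing the
   closure of P; the inverse map is again of this form, hence holomorphic too.
   (5) The parameters (eta, alpha) of a disc automorphism are determined by the map, so
   any parameters of u1 o u2 or of u^{-1} yield the same f. *)

section \<open>Moebius automorphisms of the disc\<close>

lemma unimodular_mult_cnj: "cmod \<eta> = 1 \<Longrightarrow> \<eta> * cnj \<eta> = 1"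
  by (metis complex_norm_square of_real_1 power_one)

lemma disc_denom_nonzero:
  assumes "cmod \<alpha> < 1" "cmod z \<le> 1"
  shows "1 - cnj \<alpha> * z \<noteq> 0"
proof
  assume "1 - cnj \<alpha> * z = 0"
  then have "cmod \<alpha> * cmod z = 1" by (metis complex_mod_cnj eq_iff_diff_eq_0 norm_mult norm_one)
  moreover have "cmod \<alpha> * cmod z < 1"
    using assms by (metis le_less_trans mult_left_le norm_ge_zero)
  ultimately show False by simp
qed

lemma disc_denom_lower:
  assumes "cmod \<alpha> < 1" "cmod z \<le> 1"
  shows "1 - cmod \<alpha> \<le> cmod (1 - cnj \<alpha> * z)"
proof -
  have "cmod (cnj \<alpha> * z) \<le> cmod \<alpha>"
    using assms by (simp add: norm_mult mult_left_le)
  moreover have "cmod (1::complex) - cmod (cnj \<alpha> * z) \<le> cmod (1 - cnj \<alpha> * z)"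
    by (rule norm_triangle_ineq2)
  ultimately show ?thesis by simp
qed

text \<open>The classical identity behind the fact that \<open>z \<mapsto> (z-\<alpha>)/(1 - cnj \<alpha> z)\<close> preserves the disc.\<close>

lemma moebius_norm_identity:
  "cmod (1 - cnj \<alpha> * z)^2 - cmod (z - \<alpha>)^2 = (1 - cmod \<alpha>^2) * (1 - cmod z^2)"
proof -
  have "complex_of_real (cmod (1 - cnj \<alpha> * z)^2 - cmod (z - \<alpha>)^2)
      = complex_of_real ((1 - cmod \<alpha>^2) * (1 - cmod z^2))"
    unfolding of_real_diff of_real_mult complex_norm_square of_real_1 by (simp add: algebra_simps)
  then show ?thesis by (simp only: of_real_eq_iff)
qed

lemma moebius_numerator_less:
  assumes "cmod \<alpha> < 1" "cmod z < 1"
  shows "cmod (z - \<alpha>) < cmod (1 - cnj \<alpha> * z)"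
proof -
  have "(1 - cmod \<alpha>^2) * (1 - cmod z^2) > 0" using assms by (simp add: power_less_one_iff)
  then have "cmod (z - \<alpha>)^2 < cmod (1 - cnj \<alpha> * z)^2" using moebius_norm_identity[of \<alpha> z] by linarith
  then show ?thesis using power_less_imp_less_base by fastforce
qed

lemma moeb_maps_disc:
  assumes "autD_param \<eta> \<alpha>" "cmod z < 1"
  shows "cmod (moeb \<eta> \<alpha> z) < 1"
proof -
  have "cmod (moeb \<eta> \<alpha> z) = cmod (z - \<alpha>) / cmod (1 - cnj \<alpha> * z)"
    using assms by (simp add: moeb_def autD_param_def norm_mult norm_divide)
  also have "\<dots> < 1" using moebius_numerator_less assms disc_denom_nonzero[of \<alpha> z]
    by (simp add: autD_param_def)
  finally show ?thesis .
qed

text \<open>Parameters of the composition \<open>moeb \<eta>1 \<alpha>1 \<circ> moeb \<eta>2 \<alpha>2\<close>.\<close>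

definition comp_eta :: "complex \<Rightarrow> complex \<Rightarrow> complex \<Rightarrow> complex \<Rightarrow> complex" where
  "comp_eta \<eta>1 \<alpha>1 \<eta>2 \<alpha>2 = \<eta>1 * (\<eta>2 + \<alpha>1 * cnj \<alpha>2) / (1 + cnj \<alpha>1 * \<eta>2 * \<alpha>2)"

definition comp_alpha :: "complex \<Rightarrow> complex \<Rightarrow> complex \<Rightarrow> complex \<Rightarrow> complex" where
  "comp_alpha \<eta>1 \<alpha>1 \<eta>2 \<alpha>2 = (\<eta>2 * \<alpha>2 + \<alpha>1) / (\<eta>2 + \<alpha>1 * cnj \<alpha>2)"

lemma comp_denom_nonzero:
  "autD_param \<eta>1 \<alpha>1 \<Longrightarrow> autD_param \<eta>2 \<alpha>2 \<Longrightarrow> 1 + cnj \<alpha>1 * \<eta>2 * \<alpha>2 \<noteq> 0"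
  using disc_denom_nonzero[of \<alpha>1 "- \<eta>2 * \<alpha>2"]
  by (auto simp: autD_param_def norm_mult algebra_simps)

lemma comp_denom_conj:
  "autD_param \<eta>2 \<alpha>2 \<Longrightarrow> \<eta>2 + \<alpha>1 * cnj \<alpha>2 = \<eta>2 * cnj (1 + cnj \<alpha>1 * \<eta>2 * \<alpha>2)"
  using unimodular_mult_cnj[of \<eta>2] by (simp add: autD_param_def algebra_simps)

lemma comp_denom_nonzero':
  assumes "autD_param \<eta>1 \<alpha>1" "autD_param \<eta>2 \<alpha>2"
  shows "\<eta>2 + \<alpha>1 * cnj \<alpha>2 \<noteq> 0"
proof
  assume "\<eta>2 + \<alpha>1 * cnj \<alpha>2 = 0"
  then have "\<eta>2 * cnj (1 + cnj \<alpha>1 * \<eta>2 * \<alpha>2) = 0" using comp_denom_conj[OF assms(2)] by simp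
  moreover have "\<eta>2 \<noteq> 0" using assms by (auto simp: autD_param_def)
  ultimately have "cnj (1 + cnj \<alpha>1 * \<eta>2 * \<alpha>2) = 0" by simp
  then show False using comp_denom_nonzero[OF assms] by (simp only: complex_cnj_zero_iff)
qed

text \<open>\<open>comp_alpha\<close> is the preimage of \<open>\<alpha>1\<close> under \<open>moeb \<eta>2 \<alpha>2\<close>, hence lies in the disc.\<close>

lemma comp_alpha_moeb:
  assumes a: "autD_param \<eta>1 \<alpha>1" "autD_param \<eta>2 \<alpha>2"
  shows "comp_alpha \<eta>1 \<alpha>1 \<eta>2 \<alpha>2 = moeb (cnj \<eta>2) (- \<eta>2 * \<alpha>2) \<alpha>1"
proof -
  have u: "\<eta>2 * cnj \<eta>2 = 1" using a unimodular_mult_cnj by (auto simp: autD_param_def)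
  have n: "\<eta>2 + \<alpha>1 * cnj \<alpha>2 \<noteq> 0" using comp_denom_nonzero'[OF a] .
  have "\<eta>2 * (1 + \<alpha>1 * cnj \<alpha>2 * cnj \<eta>2) = \<eta>2 + \<alpha>1 * cnj \<alpha>2"
    using u by (simp add: algebra_simps)
  then have n2: "1 + \<alpha>1 * cnj \<alpha>2 * cnj \<eta>2 \<noteq> 0" using n by force
  show ?thesis unfolding comp_alpha_def moeb_def using n n2 u by (simp add: field_simps)
qed

lemma comp_param:
  assumes a: "autD_param \<eta>1 \<alpha>1" "autD_param \<eta>2 \<alpha>2"
  shows "autD_param (comp_eta \<eta>1 \<alpha>1 \<eta>2 \<alpha>2) (comp_alpha \<eta>1 \<alpha>1 \<eta>2 \<alpha>2)"
proof -
  have "cmod (comp_alpha \<eta>1 \<alpha>1 \<eta>2 \<alpha>2) < 1"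
    unfolding comp_alpha_moeb[OF a]
    by (rule moeb_maps_disc) (use a in \<open>auto simp: autD_param_def norm_mult\<close>)
  moreover have "cmod (comp_eta \<eta>1 \<alpha>1 \<eta>2 \<alpha>2) = 1"
    unfolding comp_eta_def comp_denom_conj[OF a(2)] using a comp_denom_nonzero[OF a]
    by (simp only: norm_mult norm_divide complex_mod_cnj autD_param_def) simp
  ultimately show ?thesis by (simp add: autD_param_def)
qed

lemma cnj_comp_alpha:
  assumes a: "autD_param \<eta>1 \<alpha>1" "autD_param \<eta>2 \<alpha>2"
  shows "cnj (comp_alpha \<eta>1 \<alpha>1 \<eta>2 \<alpha>2) = (cnj \<alpha>2 + cnj \<alpha>1 * \<eta>2) / (1 + cnj \<alpha>1 * \<eta>2 * \<alpha>2)"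
proof -
  have u: "\<eta>2 * cnj \<eta>2 = 1" using a unimodular_mult_cnj by (auto simp: autD_param_def)
  have e: "cnj \<eta>2 + cnj \<alpha>1 * \<alpha>2 \<noteq> 0"
    using comp_denom_nonzero'[OF a] by (metis complex_cnj_add complex_cnj_cnj complex_cnj_mult complex_cnj_zero)
  have c: "1 + cnj \<alpha>1 * \<eta>2 * \<alpha>2 \<noteq> 0" using comp_denom_nonzero[OF a] .
  have "(cnj \<eta>2 * cnj \<alpha>2 + cnj \<alpha>1) * (1 + cnj \<alpha>1 * \<eta>2 * \<alpha>2)
      = (cnj \<alpha>2 + cnj \<alpha>1 * \<eta>2) * (cnj \<eta>2 + cnj \<alpha>1 * \<alpha>2)
        + (cnj \<alpha>1 * \<alpha>2 * cnj \<alpha>2 - cnj \<alpha>1) * (\<eta>2 * cnj \<eta>2 - 1)"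
    by algebra
  then show ?thesis unfolding comp_alpha_def using e c u by (simp add: field_simps)
qed

lemma comp_denom_factor:
  assumes a: "autD_param \<eta>1 \<alpha>1" "autD_param \<eta>2 \<alpha>2" and l: "cmod l < 1"
  shows "(1 - cnj \<alpha>1 * moeb \<eta>2 \<alpha>2 l) * (1 - cnj \<alpha>2 * l)
     = (1 + cnj \<alpha>1 * \<eta>2 * \<alpha>2) * (1 - cnj (comp_alpha \<eta>1 \<alpha>1 \<eta>2 \<alpha>2) * l)"
proof -
  define w where "w = 1 - cnj \<alpha>2 * l"
  have wn: "w \<noteq> 0" using disc_denom_nonzero[of \<alpha>2 l] a l by (simp add: w_def autD_param_def)
  have mw: "moeb \<eta>2 \<alpha>2 l * w = \<eta>2 * (l - \<alpha>2)" using wn by (simp add: moeb_def w_def)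
  have "(1 - cnj \<alpha>1 * moeb \<eta>2 \<alpha>2 l) * w = w - cnj \<alpha>1 * (moeb \<eta>2 \<alpha>2 l * w)"
    by (simp add: algebra_simps)
  also have "\<dots> = (1 + cnj \<alpha>1 * \<eta>2 * \<alpha>2) - (cnj \<alpha>2 + cnj \<alpha>1 * \<eta>2) * l"
    unfolding mw by (simp add: w_def algebra_simps)
  also have "\<dots> = (1 + cnj \<alpha>1 * \<eta>2 * \<alpha>2) * (1 - cnj (comp_alpha \<eta>1 \<alpha>1 \<eta>2 \<alpha>2) * l)"
    unfolding cnj_comp_alpha[OF a] using comp_denom_nonzero[OF a] by (simp add: field_simps)
  finally show ?thesis by (simp add: w_def)
qed

lemma comp_numer_factor:
  assumes a: "autD_param \<eta>1 \<alpha>1" "autD_param \<eta>2 \<alpha>2" and l: "cmod l < 1"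
  shows "(moeb \<eta>2 \<alpha>2 l - \<alpha>1) * (1 - cnj \<alpha>2 * l)
     = (\<eta>2 + \<alpha>1 * cnj \<alpha>2) * (l - comp_alpha \<eta>1 \<alpha>1 \<eta>2 \<alpha>2)"
proof -
  define w where "w = 1 - cnj \<alpha>2 * l"
  have wn: "w \<noteq> 0" using disc_denom_nonzero[of \<alpha>2 l] a l by (simp add: w_def autD_param_def)
  have mw: "moeb \<eta>2 \<alpha>2 l * w = \<eta>2 * (l - \<alpha>2)" using wn by (simp add: moeb_def w_def)
  have "(moeb \<eta>2 \<alpha>2 l - \<alpha>1) * w = moeb \<eta>2 \<alpha>2 l * w - \<alpha>1 * w" by (simp add: algebra_simps)
  also have "\<dots> = (\<eta>2 + \<alpha>1 * cnj \<alpha>2) * l - (\<eta>2 * \<alpha>2 + \<alpha>1)"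
    unfolding mw by (simp add: w_def algebra_simps)
  also have "\<dots> = (\<eta>2 + \<alpha>1 * cnj \<alpha>2) * (l - comp_alpha \<eta>1 \<alpha>1 \<eta>2 \<alpha>2)"
    unfolding comp_alpha_def using comp_denom_nonzero'[OF a] by (simp add: field_simps)
  finally show ?thesis by (simp add: w_def)
qed

lemma moeb_comp:
  assumes a: "autD_param \<eta>1 \<alpha>1" "autD_param \<eta>2 \<alpha>2" and z: "cmod z < 1"
  shows "moeb (comp_eta \<eta>1 \<alpha>1 \<eta>2 \<alpha>2) (comp_alpha \<eta>1 \<alpha>1 \<eta>2 \<alpha>2) z = moeb \<eta>1 \<alpha>1 (moeb \<eta>2 \<alpha>2 z)"
proof -
  define w where "w = 1 - cnj \<alpha>2 * z"
  have wn: "w \<noteq> 0" using disc_denom_nonzero[of \<alpha>2 z] a z by (simp add: w_def autD_param_def)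
  have cn: "1 + cnj \<alpha>1 * \<eta>2 * \<alpha>2 \<noteq> 0" using comp_denom_nonzero[OF a] .
  have "moeb \<eta>1 \<alpha>1 (moeb \<eta>2 \<alpha>2 z)
      = \<eta>1 * ((moeb \<eta>2 \<alpha>2 z - \<alpha>1) * w) / ((1 - cnj \<alpha>1 * moeb \<eta>2 \<alpha>2 z) * w)"
    using wn by (simp add: moeb_def)
  also have "\<dots> = \<eta>1 * ((\<eta>2 + \<alpha>1 * cnj \<alpha>2) * (z - comp_alpha \<eta>1 \<alpha>1 \<eta>2 \<alpha>2))
      / ((1 + cnj \<alpha>1 * \<eta>2 * \<alpha>2) * (1 - cnj (comp_alpha \<eta>1 \<alpha>1 \<eta>2 \<alpha>2) * z))"
    unfolding w_def comp_numer_factor[OF a z] comp_denom_factor[OF a z] ..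
  also have "\<dots> = moeb (comp_eta \<eta>1 \<alpha>1 \<eta>2 \<alpha>2) (comp_alpha \<eta>1 \<alpha>1 \<eta>2 \<alpha>2) z"
    using cn by (simp add: moeb_def comp_eta_def)
  finally show ?thesis by simp
qed

text \<open>The parameters of a disc automorphism are determined by the map: \<open>\<alpha>\<close> is its zero and
  \<open>\<eta>\<close> is then read off at one more point.\<close>

lemma moeb_param_unique:
  assumes a: "autD_param \<eta> \<alpha>" "autD_param \<eta>' \<alpha>'"
    and h: "\<forall>z. cmod z < 1 \<longrightarrow> moeb \<eta> \<alpha> z = moeb \<eta>' \<alpha>' z"
  shows "\<eta> = \<eta>' \<and> \<alpha> = \<alpha>'"
proof -
  have "moeb \<eta>' \<alpha>' \<alpha> = 0" using h a by (auto simp: moeb_def autD_param_def)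
  moreover have "1 - cnj \<alpha>' * \<alpha> \<noteq> 0" using disc_denom_nonzero[of \<alpha>' \<alpha>] a by (simp add: autD_param_def)
  moreover have "\<eta>' \<noteq> 0" using a by (auto simp: autD_param_def)
  ultimately have aa: "\<alpha> = \<alpha>'" by (simp add: moeb_def)
  have h0: "moeb \<eta> \<alpha> 0 = moeb \<eta>' \<alpha>' 0" and hh: "moeb \<eta> \<alpha> (1/2) = moeb \<eta>' \<alpha>' (1/2)"
    using h by simp_all
  show ?thesis
  proof (cases "\<alpha> = 0")
    case True
    then show ?thesis using hh aa by (simp add: moeb_def)
  next
    case False
    then show ?thesis using h0 aa by (simp add: moeb_def)
  qed
qed

text \<open>The inverse of \<open>moeb \<eta> \<alpha>\<close> is \<open>moeb (cnj \<eta>) (-\<eta>\<alpha>)\<close>: composing in either order gives the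
  parameters \<open>(1, 0)\<close> of the identity.\<close>

lemma inv_param: "autD_param \<eta> \<alpha> \<Longrightarrow> autD_param (cnj \<eta>) (- \<eta> * \<alpha>)"
  by (simp add: autD_param_def norm_mult)

lemma comp_inv_left_param:
  assumes a: "autD_param \<eta> \<alpha>"
  shows "comp_eta (cnj \<eta>) (- \<eta> * \<alpha>) \<eta> \<alpha> = 1 \<and> comp_alpha (cnj \<eta>) (- \<eta> * \<alpha>) \<eta> \<alpha> = 0"
proof -
  have u: "\<eta> * cnj \<eta> = 1" using a unimodular_mult_cnj by (auto simp: autD_param_def)
  have "cnj \<eta> * (\<eta> + - \<eta> * \<alpha> * cnj \<alpha>) = 1 + cnj (- \<eta> * \<alpha>) * \<eta> * \<alpha>"
    using u by (simp add: algebra_simps)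
  then show ?thesis using comp_denom_nonzero[OF inv_param[OF a] a]
    by (simp add: comp_eta_def comp_alpha_def)
qed

lemma comp_inv_right_param:
  assumes a: "autD_param \<eta> \<alpha>"
  shows "comp_eta \<eta> \<alpha> (cnj \<eta>) (- \<eta> * \<alpha>) = 1 \<and> comp_alpha \<eta> \<alpha> (cnj \<eta>) (- \<eta> * \<alpha>) = 0"
proof -
  have u: "\<eta> * cnj \<eta> = 1" using a unimodular_mult_cnj by (auto simp: autD_param_def)
  have "\<eta> * (cnj \<eta> + \<alpha> * cnj (- \<eta> * \<alpha>)) = 1 + cnj \<alpha> * cnj \<eta> * (- \<eta> * \<alpha>)"
    using u by (simp add: algebra_simps)
  moreover have "cnj \<eta> * (- \<eta> * \<alpha>) + \<alpha> = 0" using u by (simp add: algebra_simps)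
  ultimately show ?thesis using comp_denom_nonzero[OF a inv_param[OF a]]
    by (simp add: comp_eta_def comp_alpha_def)
qed

lemma moeb_inverse:
  assumes a: "autD_param \<eta> \<alpha>" and z: "cmod z < 1"
  shows "moeb (cnj \<eta>) (- \<eta> * \<alpha>) (moeb \<eta> \<alpha> z) = z" "moeb \<eta> \<alpha> (moeb (cnj \<eta>) (- \<eta> * \<alpha>) z) = z"
  using moeb_comp[OF inv_param[OF a] a z] moeb_comp[OF a inv_param[OF a] z]
    comp_inv_left_param[OF a] comp_inv_right_param[OF a] by (simp_all add: moeb_def)

section \<open>The maps in eigenvalue coordinates and the composition law\<close>

lemma fmap_eigen:
  assumes a: "autD_param \<eta> \<alpha>" and l: "cmod l1 < 1" "cmod l2 < 1"
  shows "fmap \<omega> \<eta> \<alpha> (x, l1+l2, l1*l2) =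
    (\<omega> * \<eta> * (1 - \<alpha> * cnj \<alpha>) * x / ((1 - cnj \<alpha> * l1) * (1 - cnj \<alpha> * l2)),
     moeb \<eta> \<alpha> l1 + moeb \<eta> \<alpha> l2, moeb \<eta> \<alpha> l1 * moeb \<eta> \<alpha> l2)"
proof -
  have n: "1 - cnj \<alpha> * l1 \<noteq> 0" "1 - cnj \<alpha> * l2 \<noteq> 0"
    using disc_denom_nonzero[of \<alpha>] a l by (auto simp: autD_param_def)
  have d: "1 - cnj \<alpha> * (l1 + l2) + (cnj \<alpha>)^2 * (l1 * l2) = (1 - cnj \<alpha> * l1) * (1 - cnj \<alpha> * l2)"
    by (simp add: algebra_simps power2_eq_square)
  show ?thesis
    unfolding fmap_def Let_def fst_conv snd_conv complex_norm_square d
    using n by (simp add: moeb_def field_simps) (simp add: algebra_simps power2_eq_square)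
qed

lemma comp_scale_factor:
  assumes a: "autD_param \<eta>1 \<alpha>1" "autD_param \<eta>2 \<alpha>2"
  shows "\<eta>1 * \<eta>2 * (1 - \<alpha>1 * cnj \<alpha>1) * (1 - \<alpha>2 * cnj \<alpha>2)
    = (1 + cnj \<alpha>1 * \<eta>2 * \<alpha>2)^2 * comp_eta \<eta>1 \<alpha>1 \<eta>2 \<alpha>2
      * (1 - comp_alpha \<eta>1 \<alpha>1 \<eta>2 \<alpha>2 * cnj (comp_alpha \<eta>1 \<alpha>1 \<eta>2 \<alpha>2))"
proof -
  define c where "c = 1 + cnj \<alpha>1 * \<eta>2 * \<alpha>2"
  define e where "e = \<eta>2 + \<alpha>1 * cnj \<alpha>2"
  have cn: "c \<noteq> 0" using comp_denom_nonzero[OF a] c_def by simp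
  have en: "e \<noteq> 0" using comp_denom_nonzero'[OF a] e_def by simp
  have id: "c * e - (\<eta>2 * \<alpha>2 + \<alpha>1) * (cnj \<alpha>2 + cnj \<alpha>1 * \<eta>2)
      = \<eta>2 * (1 - \<alpha>1 * cnj \<alpha>1) * (1 - \<alpha>2 * cnj \<alpha>2)"
    unfolding c_def e_def by algebra
  have "c^2 * comp_eta \<eta>1 \<alpha>1 \<eta>2 \<alpha>2 * (1 - comp_alpha \<eta>1 \<alpha>1 \<eta>2 \<alpha>2 * cnj (comp_alpha \<eta>1 \<alpha>1 \<eta>2 \<alpha>2))
     = c^2 * (\<eta>1 * e / c) * (1 - (\<eta>2 * \<alpha>2 + \<alpha>1) / e * ((cnj \<alpha>2 + cnj \<alpha>1 * \<eta>2) / c))"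
    unfolding cnj_comp_alpha[OF a] unfolding comp_eta_def comp_alpha_def c_def e_def by simp
  also have "\<dots> = \<eta>1 * (c * e - (\<eta>2 * \<alpha>2 + \<alpha>1) * (cnj \<alpha>2 + cnj \<alpha>1 * \<eta>2))"
    using cn en by (simp add: field_simps power2_eq_square)
  finally show ?thesis unfolding id by (simp add: c_def)
qed

lemma comp_first_coord:
  assumes a: "autD_param \<eta>1 \<alpha>1" "autD_param \<eta>2 \<alpha>2" and l: "cmod l1 < 1" "cmod l2 < 1"
  defines "\<eta> \<equiv> comp_eta \<eta>1 \<alpha>1 \<eta>2 \<alpha>2" and "\<alpha> \<equiv> comp_alpha \<eta>1 \<alpha>1 \<eta>2 \<alpha>2"
  defines "m1 \<equiv> moeb \<eta>2 \<alpha>2 l1" and "m2 \<equiv> moeb \<eta>2 \<alpha>2 l2"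
  shows "\<omega>1 * \<eta>1 * (1 - \<alpha>1 * cnj \<alpha>1)
           * (\<omega>2 * \<eta>2 * (1 - \<alpha>2 * cnj \<alpha>2) * x / ((1 - cnj \<alpha>2 * l1) * (1 - cnj \<alpha>2 * l2)))
           / ((1 - cnj \<alpha>1 * m1) * (1 - cnj \<alpha>1 * m2))
     = \<omega>1 * \<omega>2 * \<eta> * (1 - \<alpha> * cnj \<alpha>) * x / ((1 - cnj \<alpha> * l1) * (1 - cnj \<alpha> * l2))"
proof -
  define c where "c = 1 + cnj \<alpha>1 * \<eta>2 * \<alpha>2"
  have m: "cmod m1 < 1" "cmod m2 < 1" using moeb_maps_disc[OF a(2)] l by (auto simp: m1_def m2_def)
  have n1: "1 - cnj \<alpha>2 * l1 \<noteq> 0" "1 - cnj \<alpha>2 * l2 \<noteq> 0"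
    using disc_denom_nonzero[of \<alpha>2] a l by (auto simp: autD_param_def)
  have n2: "1 - cnj \<alpha>1 * m1 \<noteq> 0" "1 - cnj \<alpha>1 * m2 \<noteq> 0"
    using disc_denom_nonzero[of \<alpha>1] a m by (auto simp: autD_param_def)
  have cn: "c \<noteq> 0" using comp_denom_nonzero[OF a] c_def by simp
  have "\<omega>1 * \<eta>1 * (1 - \<alpha>1 * cnj \<alpha>1)
          * (\<omega>2 * \<eta>2 * (1 - \<alpha>2 * cnj \<alpha>2) * x / ((1 - cnj \<alpha>2 * l1) * (1 - cnj \<alpha>2 * l2)))
          / ((1 - cnj \<alpha>1 * m1) * (1 - cnj \<alpha>1 * m2))
      = \<omega>1 * \<omega>2 * (\<eta>1 * \<eta>2 * (1 - \<alpha>1 * cnj \<alpha>1) * (1 - \<alpha>2 * cnj \<alpha>2)) * x /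
        (((1 - cnj \<alpha>1 * m1) * (1 - cnj \<alpha>2 * l1)) * ((1 - cnj \<alpha>1 * m2) * (1 - cnj \<alpha>2 * l2)))"
    using n1 n2 by (simp add: field_simps)
  also have "\<dots> = (c * c) * (\<omega>1 * \<omega>2 * \<eta> * (1 - \<alpha> * cnj \<alpha>) * x)
      / ((c * c) * ((1 - cnj \<alpha> * l1) * (1 - cnj \<alpha> * l2)))"
    unfolding m1_def m2_def comp_denom_factor[OF a l(1)] comp_denom_factor[OF a l(2)]
      comp_scale_factor[OF a] \<eta>_def \<alpha>_def c_def
    by (simp add: power2_eq_square algebra_simps)
  finally show ?thesis using cn by simp
qed

lemma fmap_comp_eigen:
  assumes a: "autD_param \<eta>1 \<alpha>1" "autD_param \<eta>2 \<alpha>2" and l: "cmod l1 < 1" "cmod l2 < 1"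
  shows "fmap \<omega>1 \<eta>1 \<alpha>1 (fmap \<omega>2 \<eta>2 \<alpha>2 (x, l1+l2, l1*l2))
     = fmap (\<omega>1 * \<omega>2) (comp_eta \<eta>1 \<alpha>1 \<eta>2 \<alpha>2) (comp_alpha \<eta>1 \<alpha>1 \<eta>2 \<alpha>2) (x, l1+l2, l1*l2)"
proof -
  have m: "cmod (moeb \<eta>2 \<alpha>2 l1) < 1" "cmod (moeb \<eta>2 \<alpha>2 l2) < 1"
    using moeb_maps_disc[OF a(2)] l by auto
  show ?thesis
    unfolding fmap_eigen[OF a(2) l] fmap_eigen[OF comp_param[OF a] l] fmap_eigen[OF a(1) m]
    using comp_first_coord[OF a l] moeb_comp[OF a l(1)] moeb_comp[OF a l(2)] by simp
qed

section \<open>The operator-norm ball of 2x2 matrices\<close>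

definition img_sq :: "complex \<Rightarrow> complex \<Rightarrow> complex \<Rightarrow> complex \<Rightarrow> complex \<Rightarrow> complex \<Rightarrow> real" where
  "img_sq a b c d x1 x2 = cmod (a*x1+b*x2)^2 + cmod (c*x1+d*x2)^2"

definition vec_sq :: "complex \<Rightarrow> complex \<Rightarrow> real" where
  "vec_sq x1 x2 = cmod x1^2 + cmod x2^2"

definition hs_sq :: "complex \<Rightarrow> complex \<Rightarrow> complex \<Rightarrow> complex \<Rightarrow> real" where
  "hs_sq a b c d = cmod a^2 + cmod b^2 + cmod c^2 + cmod d^2"

definition det_sq :: "complex \<Rightarrow> complex \<Rightarrow> complex \<Rightarrow> complex \<Rightarrow> real" where
  "det_sq a b c d = cmod (a*d - b*c)^2"

text \<open>The algebraic description of \<open>\<parallel>M\<parallel> < 1\<close>: \<open>tr(M*M) < 1 + |det M|\<^sup>2\<close> and \<open>|det M| < 1\<close>.\<close>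

definition contractive :: "complex \<Rightarrow> complex \<Rightarrow> complex \<Rightarrow> complex \<Rightarrow> bool" where
  "contractive a b c d \<longleftrightarrow> hs_sq a b c d < 1 + det_sq a b c d \<and> det_sq a b c d < 1"

definition form_bound :: "complex \<Rightarrow> complex \<Rightarrow> complex \<Rightarrow> complex \<Rightarrow> real \<Rightarrow> bool" where
  "form_bound a b c d k \<longleftrightarrow> (\<forall>x1 x2. img_sq a b c d x1 x2 \<le> k * vec_sq x1 x2)"

lemma det_le_hs: "cmod (a*d - b*c) \<le> hs_sq a b c d / 2"
proof -
  have "cmod (a*d - b*c) \<le> cmod a * cmod d + cmod b * cmod c"
    by (metis norm_mult norm_triangle_ineq4)
  moreover have "2 * (cmod a * cmod d) \<le> cmod a^2 + cmod d^2"
    using sum_squares_bound[of "cmod a" "cmod d"] by (simp add: power2_eq_square)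
  moreover have "2 * (cmod b * cmod c) \<le> cmod b^2 + cmod c^2"
    using sum_squares_bound[of "cmod b" "cmod c"] by (simp add: power2_eq_square)
  ultimately have "2 * cmod (a*d - b*c) \<le> hs_sq a b c d" unfolding hs_sq_def by linarith
  then show ?thesis by simp
qed

text \<open>Necessity of contractivity: evaluate the form bound at the vector
  \<open>(cnj a b + cnj c d, 1 - |a|\<^sup>2 - |c|\<^sup>2)\<close>, where the defect \<open>\<parallel>x\<parallel>\<^sup>2 - \<parallel>M x\<parallel>\<^sup>2\<close> factors.\<close>

lemma defect_polynomial_identity:
  fixes a b c d A B C D :: complex
  shows "let H = a*A + c*C; x1 = A*b + C*d; x1' = a*B + c*D; x2 = 1 - H in
    (x1*x1' + x2*x2) - ((a*x1 + b*x2)*(A*x1' + B*x2) + (c*x1 + d*x2)*(C*x1' + D*x2))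
    = (1 - H) * (1 - (a*A+b*B+c*C+d*D) + (a*d-b*c)*(A*D-B*C))"
  unfolding Let_def by algebra

lemma defect_identity:
  "vec_sq (cnj a * b + cnj c * d) (complex_of_real (1 - (cmod a^2 + cmod c^2)))
   - img_sq a b c d (cnj a * b + cnj c * d) (complex_of_real (1 - (cmod a^2 + cmod c^2)))
   = (1 - (cmod a^2 + cmod c^2)) * (1 - hs_sq a b c d + det_sq a b c d)"
proof -
  have "complex_of_real (vec_sq (cnj a * b + cnj c * d) (complex_of_real (1 - (cmod a^2 + cmod c^2)))
   - img_sq a b c d (cnj a * b + cnj c * d) (complex_of_real (1 - (cmod a^2 + cmod c^2))))
   = complex_of_real ((1 - (cmod a^2 + cmod c^2)) * (1 - hs_sq a b c d + det_sq a b c d))"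
    unfolding vec_sq_def img_sq_def hs_sq_def det_sq_def
    apply (simp only: of_real_add of_real_mult of_real_diff complex_norm_square of_real_1
        complex_cnj_add complex_cnj_mult complex_cnj_diff complex_cnj_one complex_cnj_cnj
        complex_cnj_complex_of_real)
    using defect_polynomial_identity[of a "cnj a" c "cnj c" b d "cnj b" "cnj d"] unfolding Let_def
    by (simp add: algebra_simps)
  then show ?thesis by (simp only: of_real_eq_iff)
qed

lemma form_bound_contractive:
  assumes q: "form_bound a b c d k" and k: "k < 1"
  shows "contractive a b c d"
proof -
  have e1: "cmod a^2 + cmod c^2 \<le> k" using q[unfolded form_bound_def, rule_format, of 1 0]
    by (simp add: img_sq_def vec_sq_def)
  have e2: "cmod b^2 + cmod d^2 \<le> k" using q[unfolded form_bound_def, rule_format, of 0 1]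
    by (simp add: img_sq_def vec_sq_def)
  have "cmod (a*d - b*c) < 1" using det_le_hs[of a d b c] e1 e2 k by (simp add: hs_sq_def)
  then have D1: "det_sq a b c d < 1" unfolding det_sq_def by (simp add: power_less_one_iff)
  define h where "h = cmod a^2 + cmod c^2"
  define x1 where "x1 = cnj a * b + cnj c * d"
  define x2 where "x2 = complex_of_real (1 - h)"
  have hpos: "1 - h > 0" using e1 k h_def by simp
  have "cmod x2 = 1 - h" unfolding x2_def norm_of_real using hpos by simp
  then have "vec_sq x1 x2 \<ge> (1 - h)^2" unfolding vec_sq_def by simp
  then have npos: "vec_sq x1 x2 > 0" using hpos by (smt (verit) zero_less_power)
  have "vec_sq x1 x2 - img_sq a b c d x1 x2 \<ge> (1 - k) * vec_sq x1 x2"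
    using q[unfolded form_bound_def, rule_format, of x1 x2] by (simp add: algebra_simps)
  moreover have "(1 - k) * vec_sq x1 x2 > 0" using k npos by simp
  ultimately have "(1 - h) * (1 - hs_sq a b c d + det_sq a b c d) > 0"
    using defect_identity[of a b c d] unfolding h_def x1_def x2_def by linarith
  then have "1 - hs_sq a b c d + det_sq a b c d > 0" using hpos by (simp add: zero_less_mult_iff)
  then show ?thesis using D1 by (simp add: contractive_def)
qed

text \<open>Sufficiency: for \<open>x\<close> and the orthogonal vector \<open>J x = (-cnj x2, cnj x1)\<close> the values of the form
  have sum \<open>hs_sq \<cdot> \<parallel>x\<parallel>\<^sup>2\<close> and product at least \<open>det_sq \<cdot> \<parallel>x\<parallel>\<^sup>4\<close> (Gram determinant), which bounds
  each value by the larger root of \<open>t\<^sup>2 - hs_sq t + det_sq\<close>.\<close>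

lemma gram_polynomial_identity:
  fixes a b c d A B C D x1 x2 X1 X2 :: complex
  shows "let y1 = -X2; y2 = X1; Y1 = -x2; Y2 = x1;
     u1 = a*x1+b*x2; u2 = c*x1+d*x2; U1 = A*X1+B*X2; U2 = C*X1+D*X2;
     w1 = a*y1+b*y2; w2 = c*y1+d*y2; W1 = A*Y1+B*Y2; W2 = C*Y1+D*Y2 in
     (u1*U1 + u2*U2) + (w1*W1 + w2*W2) = (a*A+b*B+c*C+d*D) * (x1*X1+x2*X2) \<and>
     (u1*U1 + u2*U2) * (w1*W1 + w2*W2) = (u1*W1 + u2*W2) * (U1*w1 + U2*w2)
       + ((a*d-b*c)*(A*D-B*C)) * ((x1*X1+x2*X2) * (x1*X1+x2*X2))"
  unfolding Let_def by algebra

lemma gram_identities: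
  "img_sq a b c d x1 x2 + img_sq a b c d (- cnj x2) (cnj x1) = hs_sq a b c d * vec_sq x1 x2 \<and>
   img_sq a b c d x1 x2 * img_sq a b c d (- cnj x2) (cnj x1) =
     cmod ((a*x1+b*x2) * cnj (a*(- cnj x2)+b*cnj x1) + (c*x1+d*x2) * cnj (c*(- cnj x2)+d*cnj x1))^2
     + det_sq a b c d * (vec_sq x1 x2 * vec_sq x1 x2)"
proof -
  have "complex_of_real (img_sq a b c d x1 x2 + img_sq a b c d (- cnj x2) (cnj x1))
          = complex_of_real (hs_sq a b c d * vec_sq x1 x2) \<and>
        complex_of_real (img_sq a b c d x1 x2 * img_sq a b c d (- cnj x2) (cnj x1)) = complex_of_real (
          cmod ((a*x1+b*x2) * cnj (a*(- cnj x2)+b*cnj x1) + (c*x1+d*x2) * cnj (c*(- cnj x2)+d*cnj x1))^2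
          + det_sq a b c d * (vec_sq x1 x2 * vec_sq x1 x2))"
    unfolding vec_sq_def img_sq_def hs_sq_def det_sq_def
    apply (simp only: of_real_add of_real_mult of_real_diff complex_norm_square of_real_1
        complex_cnj_add complex_cnj_mult complex_cnj_diff complex_cnj_one complex_cnj_cnj
        complex_cnj_minus)
    using gram_polynomial_identity[of a b x1 x2 c d "cnj a" "cnj x1" "cnj b" "cnj x2" "cnj c" "cnj d"]
    unfolding Let_def by (simp add: algebra_simps)
  then show ?thesis by (simp only: of_real_eq_iff)
qed

lemma quadratic_bound:
  fixes q n T D :: real
  assumes "q \<ge> 0" "n \<ge> 0" "T^2 \<ge> 4*D" "q * (T*n - q) \<ge> D * n^2"
  shows "q \<le> (T + sqrt (T^2 - 4*D)) / 2 * n"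
proof -
  have "(2*q - T*n)^2 \<le> (n * sqrt (T^2 - 4*D))^2"
    using assms by (simp add: power2_eq_square algebra_simps power_mult_distrib)
  then have "\<bar>2*q - T*n\<bar> \<le> \<bar>n * sqrt (T^2 - 4*D)\<bar>" using abs_le_square_iff by blast
  then show ?thesis using assms by (simp add: algebra_simps)
qed

lemma contractive_form_bound:
  assumes g: "contractive a b c d"
  shows "\<exists>k<1. form_bound a b c d k"
proof -
  define T where "T = hs_sq a b c d"
  define D where "D = det_sq a b c d"
  have TD: "T < 1 + D" "D < 1" using g by (auto simp: contractive_def T_def D_def)
  have T4: "T^2 \<ge> 4*D"
  proof -
    have "cmod (a*d - b*c) \<le> T/2" using det_le_hs T_def by simp
    then have "cmod (a*d - b*c)^2 \<le> (T/2)^2" by (simp add: power_mono)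
    then show ?thesis by (simp add: D_def det_sq_def power2_eq_square)
  qed
  define M where "M = (T + sqrt (T^2 - 4*D)) / 2"
  have "sqrt (T^2 - 4*D) < 2 - T"
    by (rule real_less_lsqrt) (use TD in \<open>simp_all add: power2_eq_square algebra_simps\<close>)
  then have M1: "M < 1" unfolding M_def by simp
  have "form_bound a b c d M"
    unfolding form_bound_def
  proof (intro allI)
    fix x1 x2
    have G: "img_sq a b c d x1 x2 + img_sq a b c d (- cnj x2) (cnj x1) = T * vec_sq x1 x2"
        "img_sq a b c d x1 x2 * img_sq a b c d (- cnj x2) (cnj x1) \<ge> D * vec_sq x1 x2 ^2"
      using gram_identities[of a b c d x1 x2] by (auto simp: T_def D_def power2_eq_square)
    then have "img_sq a b c d x1 x2 * (T * vec_sq x1 x2 - img_sq a b c d x1 x2) \<ge> D * vec_sq x1 x2 ^2"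
      by (metis add_diff_cancel_left')
    moreover have q0: "0 \<le> img_sq a b c d x1 x2" by (simp add: img_sq_def)
    moreover have n0: "0 \<le> vec_sq x1 x2" by (simp add: vec_sq_def)
    ultimately show "img_sq a b c d x1 x2 \<le> M * vec_sq x1 x2"
      unfolding M_def using quadratic_bound[OF q0 n0 T4] by blast
  qed
  then show ?thesis using M1 by blast
qed

lemma eigenvector_exists:
  fixes a b c d l :: complex
  assumes "l^2 - (a+d)*l + (a*d-b*c) = 0"
  shows "\<exists>z1 z2. (z1 \<noteq> 0 \<or> z2 \<noteq> 0) \<and> a * z1 + b * z2 = l * z1 \<and> c * z1 + d * z2 = l * z2"
proof (cases "b \<noteq> 0 \<or> l \<noteq> a")
  case True
  have "l*(l-a) - (c*b + d*(l-a)) = l^2 - (a+d)*l + (a*d-b*c)" by algebra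
  then have "c*b + d*(l-a) = l*(l-a)" using assms by simp
  then show ?thesis using True by (intro exI[of _ b] exI[of _ "l-a"]) (auto simp: algebra_simps)
next
  case False
  then have b: "b = 0" "l = a" by auto
  show ?thesis
  proof (cases "l \<noteq> d \<or> c \<noteq> 0")
    case True
    then show ?thesis using b by (intro exI[of _ "l-d"] exI[of _ c]) (auto simp: algebra_simps)
  next
    case False
    then show ?thesis using b by (intro exI[of _ 1] exI[of _ 0]) auto
  qed
qed

lemma eigenvalue_in_disc:
  assumes q: "form_bound a b c d k" and k: "k < 1" and l: "l^2 - (a+d)*l + (a*d-b*c) = 0"
  shows "cmod l < 1"
proof -
  obtain z1 z2 where v: "z1 \<noteq> 0 \<or> z2 \<noteq> 0" "a * z1 + b * z2 = l * z1" "c * z1 + d * z2 = l * z2"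
    using eigenvector_exists[OF l] by blast
  have Q: "img_sq a b c d z1 z2 = cmod l^2 * vec_sq z1 z2"
    unfolding img_sq_def vec_sq_def v(2,3) by (simp add: norm_mult power_mult_distrib algebra_simps)
  have n: "vec_sq z1 z2 > 0" using v(1) unfolding vec_sq_def
    by (metis add_nonneg_pos add_pos_nonneg norm_ge_zero zero_less_norm_iff zero_less_power zero_le_power)
  have "cmod l^2 * vec_sq z1 z2 \<le> k * vec_sq z1 z2" using q Q unfolding form_bound_def by metis
  then have "cmod l^2 < 1" using n k by simp
  then show ?thesis by (simp add: power_less_one_iff)
qed

lemma sum_product_roots: "\<exists>l1 l2. l1 + l2 = s \<and> l1 * l2 = (p::complex)"
proof -
  define r where "r = csqrt (s^2 - 4*p)"
  have "r^2 = s^2 - 4*p" by (simp add: r_def)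
  then show ?thesis
    by (intro exI[of _ "(s + r)/2"] exI[of _ "(s - r)/2"]) (simp add: field_simps power2_eq_square)
qed

lemma contractive_eigenvalues:
  assumes "contractive a b c d"
  shows "\<exists>l1 l2. cmod l1 < 1 \<and> cmod l2 < 1 \<and> a + d = l1 + l2 \<and> a*d - b*c = l1*l2"
proof -
  obtain k where q: "form_bound a b c d k" "k < 1" using contractive_form_bound[OF assms] by blast
  obtain l1 l2 where l: "l1 + l2 = a + d" "l1 * l2 = a*d - b*c" using sum_product_roots by blast
  have "l1^2 - (a+d)*l1 + (a*d-b*c) = 0" "l2^2 - (a+d)*l2 + (a*d-b*c) = 0"
    unfolding l[symmetric] by (simp_all add: algebra_simps power2_eq_square)
  then show ?thesis using eigenvalue_in_disc[OF q] l by metis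
qed

text \<open>The form bound is exactly the statement \<open>onorm (M *v -) \<le> sqrt k\<close>.\<close>

lemma norm_mat_vec_sq:
  "norm ((A::complex^2^2) *v v) ^2 = img_sq (A$1$1) (A$1$2) (A$2$1) (A$2$2) (v$1) (v$2)"
  by (simp add: norm_vec_def L2_set_def sum_2 matrix_vector_mult_def img_sq_def)

lemma norm_vec2_sq: "norm (v::complex^2) ^2 = vec_sq (v$1) (v$2)"
  by (simp add: norm_vec_def L2_set_def sum_2 vec_sq_def)

lemma matball_form_bound:
  assumes "A \<in> matball"
  shows "\<exists>k<1. form_bound (A$1$1) (A$1$2) (A$2$1) (A$2$2) k"
proof -
  define f where "f = (\<lambda>x::complex^2. A *v x)"
  have bl: "bounded_linear f" unfolding f_def by simp
  have o1: "onorm f < 1" using assms unfolding matball_def f_def by simp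
  have o0: "0 \<le> onorm f" using onorm_pos_le[OF bl] .
  have "form_bound (A$1$1) (A$1$2) (A$2$1) (A$2$2) ((onorm f)^2)"
    unfolding form_bound_def
  proof (intro allI)
    fix x1 x2
    define v where "v = (vector [x1, x2] :: complex^2)"
    have "norm (f v)^2 \<le> (onorm f * norm v)^2" using onorm[OF bl] by (simp add: power_mono)
    then show "img_sq (A$1$1) (A$1$2) (A$2$1) (A$2$2) x1 x2 \<le> (onorm f)^2 * vec_sq x1 x2"
      unfolding f_def power_mult_distrib norm_mat_vec_sq unfolding norm_vec2_sq by (simp add: v_def)
  qed
  moreover have "(onorm f)^2 < 1" using o0 o1 by (simp add: power_less_one_iff)
  ultimately show ?thesis by blast
qed

lemma form_bound_matball:
  assumes q: "form_bound (A$1$1) (A$1$2) (A$2$1) (A$2$2) k" and k: "k < 1"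
  shows "A \<in> matball"
proof -
  define k' where "k' = max k 0"
  have k': "0 \<le> k'" "k' < 1" using k by (auto simp: k'_def)
  have "onorm (\<lambda>x::complex^2. A *v x) \<le> sqrt k'"
  proof (rule onorm_le)
    fix v :: "complex^2"
    have "norm (A *v v)^2 \<le> k * norm v ^2"
      using q unfolding form_bound_def norm_mat_vec_sq unfolding norm_vec2_sq by blast
    also have "\<dots> \<le> k' * norm v^2" by (simp add: k'_def mult_right_mono)
    finally have "norm (A *v v) \<le> sqrt (k' * norm v^2)" by (rule real_le_rsqrt)
    then show "norm (A *v v) \<le> sqrt k' * norm v" by (simp add: real_sqrt_mult)
  qed
  moreover have "sqrt k' < 1" using k' by simp
  ultimately have "onorm (\<lambda>x::complex^2. A *v x) < 1" by linarith
  then show ?thesis unfolding matball_def by simp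
qed

section \<open>Description of the pentablock\<close>

definition mat2 :: "complex \<Rightarrow> complex \<Rightarrow> complex \<Rightarrow> complex \<Rightarrow> complex^2^2" where
  "mat2 a b c d = vector [vector [a, b], vector [c, d]]"

lemma pentablock_iff:
  "x \<in> pentablock \<longleftrightarrow> (\<exists>a b c d. contractive a b c d \<and> x = (c, a+d, a*d-b*c))"
proof
  assume "x \<in> pentablock"
  then obtain A where A: "A \<in> matball" "x = piA A" unfolding pentablock_def by blast
  then have "contractive (A$1$1) (A$1$2) (A$2$1) (A$2$2)"
    using matball_form_bound form_bound_contractive by blast
  moreover have "x = (A$2$1, A$1$1 + A$2$2, A$1$1 * A$2$2 - A$1$2 * A$2$1)"
    using A(2) by (simp add: piA_def det_2)
  ultimately show "\<exists>a b c d. contractive a b c d \<and> x = (c, a+d, a*d-b*c)" by blast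
next
  assume "\<exists>a b c d. contractive a b c d \<and> x = (c, a+d, a*d-b*c)"
  then obtain a b c d where g: "contractive a b c d" "x = (c, a+d, a*d-b*c)" by blast
  obtain k where "k < 1" "form_bound a b c d k" using contractive_form_bound[OF g(1)] by blast
  then have "mat2 a b c d \<in> matball" using form_bound_matball[of "mat2 a b c d" k] by (simp add: mat2_def)
  moreover have "piA (mat2 a b c d) = x" using g(2) by (simp add: piA_def det_2 mat2_def)
  ultimately show "x \<in> pentablock" unfolding pentablock_def by blast
qed

lemma pentablock_eigen:
  "x \<in> pentablock \<Longrightarrow> \<exists>c l1 l2. cmod l1 < 1 \<and> cmod l2 < 1 \<and> x = (c, l1+l2, l1*l2)"
  unfolding pentablock_iff using contractive_eigenvalues by metis

section \<open>The maps preserve the pentablock\<close>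

text \<open>\<open>fmap\<close> is induced by the matrix map \<open>A \<mapsto> \<eta> (A - \<alpha>)(1 - cnj \<alpha> A)\<^sup>-\<^sup>1\<close>, conjugated by
  \<open>diag(1, \<omega>)\<close>.  Writing \<open>(1 - cnj \<alpha> A)\<^sup>-\<^sup>1 = adj(1 - cnj \<alpha> A) / det(1 - cnj \<alpha> A)\<close>, the entries of
  \<open>(A - \<alpha>) adj(1 - cnj \<alpha> A)\<close> are \<open>mt11, \<dots>, mt22\<close>; \<open>dual_char\<close> is \<open>det(1 - cnj \<alpha> A)\<close> and \<open>char_poly\<close>
  is \<open>det(A - \<alpha>)\<close>.\<close>

definition "mt11 a b c d l = (a-l)*(1-cnj l*d)+b*cnj l*c"
definition "mt12 a b c d l = b*(1-l*cnj l)"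
definition "mt21 a b c d l = c*(1-l*cnj l)"
definition "mt22 a b c d l = c*cnj l*b+(d-l)*(1-cnj l*a)"
definition "dual_char a b c d l = 1 - cnj l * (a+d) + (cnj l)^2 * (a*d-b*c)"
definition "char_poly a b c d l = l^2 - l*(a+d) + (a*d-b*c)"

lemma mt_trace: "mt11 a b c d l + mt22 a b c d l
    = - 2 * l + (1 + l * cnj l) * (a+d) - 2 * cnj l * (a*d-b*c)"
  unfolding mt11_def mt22_def by algebra

lemma mt_det: "mt11 a b c d l * mt22 a b c d l - mt12 a b c d l * mt21 a b c d l
    = char_poly a b c d l * dual_char a b c d l"
  unfolding mt11_def mt22_def mt12_def mt21_def char_poly_def dual_char_def by algebra

text \<open>The contractivity defect \<open>1 - hs_sq + det_sq\<close> is multiplied by the positive factor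
  \<open>(1 - |\<alpha>|\<^sup>2)\<^sup>2\<close> under the matrix map.\<close>

lemma mt_polynomial_identity:
  fixes a b c d l a' b' c' d' l' :: complex
  shows "(1 - l' * (a+d) + l'^2 * (a*d-b*c)) * (1 - l * (a'+d') + l^2 * (a'*d'-b'*c'))
   - (((a-l)*(1-l'*d)+b*l'*c) * ((a'-l')*(1-l*d')+b'*l*c') + (b*(1-l*l'))*(b'*(1-l'*l))
      + (c*(1-l*l'))*(c'*(1-l'*l)) + (c*l'*b+(d-l)*(1-l'*a))*(c'*l*b'+(d'-l')*(1-l*a')))
   + (l^2-l*(a+d)+(a*d-b*c))*(l'^2-l'*(a'+d')+(a'*d'-b'*c'))
    = (1 - l*l')^2 * (1 - (a*a'+b*b'+c*c'+d*d') + (a*d-b*c)*(a'*d'-b'*c'))"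
  by algebra

lemma mt_defect_identity:
  "cmod (dual_char a b c d l)^2
     - (cmod (mt11 a b c d l)^2 + cmod (mt12 a b c d l)^2 + cmod (mt21 a b c d l)^2 + cmod (mt22 a b c d l)^2)
     + cmod (char_poly a b c d l)^2
   = (1 - cmod l^2)^2 * (1 - hs_sq a b c d + det_sq a b c d)"
proof -
  have "complex_of_real (cmod (dual_char a b c d l)^2
     - (cmod (mt11 a b c d l)^2 + cmod (mt12 a b c d l)^2 + cmod (mt21 a b c d l)^2 + cmod (mt22 a b c d l)^2)
     + cmod (char_poly a b c d l)^2)
   = complex_of_real ((1 - cmod l^2) * (1 - cmod l^2) * (1 - hs_sq a b c d + det_sq a b c d))"
    unfolding dual_char_def mt11_def mt12_def mt21_def mt22_def char_poly_def hs_sq_def det_sq_def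
    apply (simp only: of_real_add of_real_mult of_real_diff complex_norm_square of_real_1
        complex_cnj_add complex_cnj_mult complex_cnj_diff complex_cnj_one complex_cnj_cnj complex_cnj_power)
    using mt_polynomial_identity[where l'="cnj l" and a'="cnj a" and b'="cnj b" and c'="cnj c" and d'="cnj d"]
    by (simp add: power2_eq_square)
  then show ?thesis by (simp only: of_real_eq_iff power2_eq_square)
qed

text \<open>For a contractive matrix (eigenvalues in the disc) and \<open>\<alpha>\<close> in the disc,
  \<open>|det(A - \<alpha>)| < |det(1 - cnj \<alpha> A)|\<close>, by \<open>moebius_numerator_less\<close> applied to each eigenvalue.\<close>

lemma char_poly_less_dual:
  assumes g: "contractive a b c d" and al: "cmod \<alpha> < 1"
  shows "cmod (char_poly a b c d \<alpha>) < cmod (dual_char a b c d \<alpha>)"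
proof -
  obtain l1 l2 where l: "cmod l1 < 1" "cmod l2 < 1" "a + d = l1 + l2" "a*d - b*c = l1*l2"
    using contractive_eigenvalues[OF g] by blast
  have "dual_char a b c d \<alpha> = (1 - cnj \<alpha> * l1) * (1 - cnj \<alpha> * l2)"
    unfolding dual_char_def l(3,4) by (simp add: algebra_simps power2_eq_square)
  moreover have "char_poly a b c d \<alpha> = (l1 - \<alpha>) * (l2 - \<alpha>)"
    unfolding char_poly_def l(3,4) by (simp add: algebra_simps power2_eq_square)
  moreover have "cmod (l1 - \<alpha>) * cmod (l2 - \<alpha>) < cmod (1 - cnj \<alpha> * l1) * cmod (1 - cnj \<alpha> * l2)"
    using moebius_numerator_less[OF al l(1)] moebius_numerator_less[OF al l(2)]
    by (intro mult_strict_mono) auto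
  ultimately show ?thesis by (simp add: norm_mult)
qed

lemma mt_contractive:
  assumes g: "contractive a b c d" and w: "cmod \<omega> = 1" and a: "autD_param \<eta> \<alpha>"
  defines "D \<equiv> dual_char a b c d \<alpha>"
  shows "contractive (\<eta> * mt11 a b c d \<alpha> / D) (\<eta> * cnj \<omega> * mt12 a b c d \<alpha> / D)
                     (\<eta> * \<omega> * mt21 a b c d \<alpha> / D) (\<eta> * mt22 a b c d \<alpha> / D)"
    (is "contractive ?a ?b ?c ?d")
proof -
  have al: "cmod \<alpha> < 1" "cmod \<eta> = 1" using a by (auto simp: autD_param_def)
  have PD: "cmod (char_poly a b c d \<alpha>) < cmod D" using char_poly_less_dual[OF g al(1)] D_def by simp
  then have cD: "cmod D > 0" by (smt (verit) norm_ge_zero)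
  then have Dn: "D \<noteq> 0" by simp
  have "?a * ?d - ?b * ?c
      = \<eta> * \<eta> * (mt11 a b c d \<alpha> * mt22 a b c d \<alpha> - (\<omega> * cnj \<omega>) * (mt12 a b c d \<alpha> * mt21 a b c d \<alpha>)) / (D * D)"
    using Dn by (simp add: field_simps)
  also have "\<dots> = \<eta> * \<eta> * char_poly a b c d \<alpha> / D"
    unfolding unimodular_mult_cnj[OF w] mult_1 mt_det using Dn by (simp add: D_def field_simps)
  finally have det: "det_sq ?a ?b ?c ?d = cmod (char_poly a b c d \<alpha>)^2 / cmod D ^2"
    unfolding det_sq_def using al by (simp add: norm_mult norm_divide power_divide)
  have hs: "hs_sq ?a ?b ?c ?d = (cmod (mt11 a b c d \<alpha>)^2 + cmod (mt12 a b c d \<alpha>)^2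
      + cmod (mt21 a b c d \<alpha>)^2 + cmod (mt22 a b c d \<alpha>)^2) / cmod D ^2"
    unfolding hs_sq_def using al w by (simp add: norm_mult norm_divide power_divide add_divide_distrib)
  have "1 - cmod \<alpha>^2 > 0" "1 - hs_sq a b c d + det_sq a b c d > 0"
    using al g by (simp_all add: power_less_one_iff contractive_def)
  then have "cmod D^2 - (cmod (mt11 a b c d \<alpha>)^2 + cmod (mt12 a b c d \<alpha>)^2 + cmod (mt21 a b c d \<alpha>)^2
      + cmod (mt22 a b c d \<alpha>)^2) + cmod (char_poly a b c d \<alpha>)^2 > 0"
    using mt_defect_identity[of a b c d \<alpha>] D_def by simp
  then have "hs_sq ?a ?b ?c ?d < 1 + det_sq ?a ?b ?c ?d" unfolding hs det using cD
    by (simp add: divide_simps)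
  moreover have "det_sq ?a ?b ?c ?d < 1" unfolding det using cD PD
    by (simp add: divide_simps power_strict_mono)
  ultimately show ?thesis by (simp add: contractive_def)
qed

lemma fmap_mt:
  fixes \<omega> \<eta> \<alpha> a b c d :: complex
  assumes w: "cmod \<omega> = 1" and D: "dual_char a b c d \<alpha> \<noteq> 0"
  defines "a' \<equiv> \<eta> * mt11 a b c d \<alpha> / dual_char a b c d \<alpha>"
    and "b' \<equiv> \<eta> * cnj \<omega> * mt12 a b c d \<alpha> / dual_char a b c d \<alpha>"
    and "c' \<equiv> \<eta> * \<omega> * mt21 a b c d \<alpha> / dual_char a b c d \<alpha>"
    and "d' \<equiv> \<eta> * mt22 a b c d \<alpha> / dual_char a b c d \<alpha>"
  shows "fmap \<omega> \<eta> \<alpha> (c, a+d, a*d-b*c) = (c', a' + d', a' * d' - b' * c')"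
proof -
  have "a' * d' - b' * c' = \<eta> * \<eta> * (mt11 a b c d \<alpha> * mt22 a b c d \<alpha>
      - (\<omega> * cnj \<omega>) * (mt12 a b c d \<alpha> * mt21 a b c d \<alpha>)) / (dual_char a b c d \<alpha>)^2"
    using D by (simp add: a'_def b'_def c'_def d'_def field_simps power2_eq_square)
  also have "\<dots> = \<eta> / dual_char a b c d \<alpha> * (\<eta> * char_poly a b c d \<alpha>)"
    unfolding unimodular_mult_cnj[OF w] mult_1 mt_det using D by (simp add: field_simps power2_eq_square)
  finally have det: "a' * d' - b' * c' = \<eta> / dual_char a b c d \<alpha> * (\<eta> * char_poly a b c d \<alpha>)" .
  have tr: "a' + d' = \<eta> / dual_char a b c d \<alpha>
      * (- 2 * \<alpha> + (1 + \<alpha> * cnj \<alpha>) * (a+d) - 2 * cnj \<alpha> * (a*d-b*c))"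
    unfolding a'_def d'_def mt_trace[symmetric] using D by (simp add: field_simps)
  have "c' = \<eta> / dual_char a b c d \<alpha> * (\<omega> * (1 - \<alpha> * cnj \<alpha>) * c)"
    unfolding c'_def mt21_def by (simp add: field_simps)
  then show ?thesis
    unfolding det tr fmap_def Let_def fst_conv snd_conv complex_norm_square
    by (simp add: dual_char_def char_poly_def)
qed

lemma fmap_maps_pentablock:
  assumes x: "x \<in> pentablock" and w: "cmod \<omega> = 1" and a: "autD_param \<eta> \<alpha>"
  shows "fmap \<omega> \<eta> \<alpha> x \<in> pentablock"
proof -
  obtain a b c d where g: "contractive a b c d" and x: "x = (c, a+d, a*d-b*c)"
    using x unfolding pentablock_iff by blast
  have "cmod (char_poly a b c d \<alpha>) < cmod (dual_char a b c d \<alpha>)"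
    using char_poly_less_dual[OF g] a by (auto simp: autD_param_def)
  then have D: "dual_char a b c d \<alpha> \<noteq> 0" by (metis norm_ge_zero norm_zero not_less)
  show ?thesis unfolding x fmap_mt[OF w D] pentablock_iff using mt_contractive[OF g w a] by blast
qed

section \<open>The pentablock is open\<close>

text \<open>Near a point \<open>(c, a+d, ad-bc)\<close> of the pentablock, keep \<open>b\<close> fixed and recover the remaining
  entries from \<open>y = (y1, s, p)\<close>: the diagonal entries are the roots of \<open>t\<^sup>2 - s t + (p + b y1)\<close>,
  ordered so that the first one is the root closer to \<open>a\<close>.  This lift is continuous at the
  point, and contractivity is an open condition.\<close>

definition root_of :: "complex \<Rightarrow> complex \<Rightarrow> complex" where
  "root_of s q = (s + csqrt (s^2 - 4*q)) / 2"

lemma root_of_root: "(root_of s q)^2 = s * root_of s q - q"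
proof -
  define X where "X = csqrt (s^2 - 4*q)"
  have h: "X * X = s * s - 4*q" using power2_csqrt[of "s^2 - 4*q"] by (simp add: X_def power2_eq_square)
  show ?thesis unfolding root_of_def X_def[symmetric] by (simp add: power2_eq_square field_simps h)
qed

definition lift_diag :: "complex \<Rightarrow> complex \<Rightarrow> complex \<Rightarrow> c3 \<Rightarrow> c3" where
  "lift_diag b a d y = (let s = fst (snd y); r = root_of s (snd (snd y) + b * fst y) in
      if cmod (r - a) \<le> cmod (r - d) then (r, fst y, s - r) else (s - r, fst y, r))"

lemma lift_diag_preimage:
  "y = (fst (snd (lift_diag b a d y)),
        fst (lift_diag b a d y) + snd (snd (lift_diag b a d y)),
        fst (lift_diag b a d y) * snd (snd (lift_diag b a d y)) - b * fst (snd (lift_diag b a d y)))"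
proof (cases y)
  case (fields y1 s p)
  define r where "r = root_of s (p + b * y1)"
  have "r * (s - r) = p + b * y1"
    using root_of_root[of s "p + b * y1"] unfolding r_def by (simp add: algebra_simps power2_eq_square)
  then show ?thesis by (auto simp: fields lift_diag_def Let_def r_def[symmetric] algebra_simps)
qed

lemma root_bound:
  fixes r s q :: complex
  assumes "r^2 = s*r - q"
  shows "cmod r \<le> 1 + cmod s + cmod q"
proof (cases "cmod r \<le> 1")
  case True then show ?thesis by (smt (verit) norm_ge_zero)
next
  case False
  have "cmod r * cmod r = cmod (s*r - q)" using assms by (simp add: power2_eq_square norm_mult[symmetric])
  also have "\<dots> \<le> cmod s * cmod r + cmod q" by (metis norm_mult norm_triangle_ineq4)
  also have "\<dots> \<le> cmod s * cmod r + cmod q * cmod r" using False by (simp add: mult_le_cancel_left1)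
  finally have "cmod r * cmod r \<le> (cmod s + cmod q) * cmod r" by (simp add: algebra_simps)
  then have "cmod r \<le> cmod s + cmod q" using mult_right_le_imp_le False by fastforce
  then show ?thesis by simp
qed

lemma root_near:
  fixes r s q a d :: complex
  assumes h: "r^2 = s*r - q"
  shows "min (cmod (r-a)) (cmod (r-d)) \<le> sqrt (cmod (s-(a+d)) * (1 + cmod s + cmod q) + cmod (q - a*d))"
proof -
  have "(r-a)*(r-d) = (s-(a+d))*r - (q - a*d)" using h by (simp add: algebra_simps power2_eq_square)
  then have "cmod (r-a) * cmod (r-d) \<le> cmod (s-(a+d)) * cmod r + cmod (q - a*d)"
    by (metis norm_mult norm_triangle_ineq4)
  also have "\<dots> \<le> cmod (s-(a+d)) * (1 + cmod s + cmod q) + cmod (q - a*d)"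
    using root_bound[OF h] by (simp add: mult_left_mono)
  moreover have "min (cmod (r-a)) (cmod (r-d)) ^2 \<le> cmod (r-a) * cmod (r-d)"
    by (simp add: power2_eq_square min_def mult_left_mono mult_right_mono)
  ultimately show ?thesis by (intro real_le_rsqrt) linarith
qed

lemma root_pair_dist:
  fixes r s u v w :: complex
  assumes "cmod (r - u) \<le> e"
  shows "norm ((r, w, s - r) - (u, c, v)) \<le> 2 * (cmod (s - (u+v)) + e) + cmod (w - c)"
proof -
  have "cmod ((s - r) - v) = cmod ((s - (u+v)) + (u - r))" by (simp add: algebra_simps)
  also have "\<dots> \<le> cmod (s - (u+v)) + cmod (r - u)" by (metis norm_minus_commute norm_triangle_ineq)
  finally have "cmod ((s - r) - v) \<le> cmod (s - (u+v)) + e" using assms by simp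
  moreover have "norm ((r, w, s - r) - (u, c, v)) \<le> cmod (r - u) + cmod (w - c) + cmod ((s - r) - v)"
    using norm_Pair_le[of "r - u" "(w - c, (s - r) - v)"] norm_Pair_le[of "w - c" "(s - r) - v"] by simp
  ultimately show ?thesis using assms by (smt (verit) norm_ge_zero)
qed

lemma lift_diag_dist:
  fixes y :: c3 and a b c d :: complex
  defines "s \<equiv> fst (snd y)" and "q \<equiv> snd (snd y) + b * fst y"
  shows "norm (lift_diag b a d y - (a, c, d))
    \<le> 2 * (cmod (s - (a+d)) + sqrt (cmod (s-(a+d)) * (1 + cmod s + cmod q) + cmod (q - a*d)))
      + cmod (fst y - c)"
proof -
  define r where "r = root_of s q"
  define e where "e = sqrt (cmod (s-(a+d)) * (1 + cmod s + cmod q) + cmod (q - a*d))"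
  have m: "min (cmod (r-a)) (cmod (r-d)) \<le> e"
    unfolding e_def r_def using root_near[OF root_of_root] .
  have E: "lift_diag b a d y = (if cmod (r - a) \<le> cmod (r - d) then (r, fst y, s - r) else (s - r, fst y, r))"
    by (simp add: lift_diag_def Let_def s_def q_def r_def)
  show ?thesis
  proof (cases "cmod (r - a) \<le> cmod (r - d)")
    case True
    then have "cmod (r - a) \<le> e" using m by simp
    then show ?thesis unfolding E e_def[symmetric] using True root_pair_dist[where v=d] by simp
  next
    case False
    then have "cmod (r - d) \<le> e" using m by simp
    from root_pair_dist[where v=a and w="fst y" and s=s and c=c, OF this]
    have "norm ((r, fst y, s - r) - (d, c, a)) \<le> 2 * (cmod (s - (a+d)) + e) + cmod (fst y - c)"
      by (simp add: add.commute)
    moreover have "norm ((s - r, fst y, r) - (a, c, d)) = norm ((r, fst y, s - r) - (d, c, a))"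
      by (simp add: norm_Pair power2_commute norm_minus_commute add.commute)
    ultimately show ?thesis unfolding E e_def[symmetric] using False by simp
  qed
qed

lemma lift_diag_tendsto: "(lift_diag b a d \<longlongrightarrow> (a, c, d)) (nhds (c, a+d, a*d - b*c))"
proof -
  define B where "B = (\<lambda>y. 2 * (cmod (fst (snd y) - (a+d)) + sqrt (cmod (fst (snd y) - (a+d))
      * (1 + cmod (fst (snd y)) + cmod (snd (snd y) + b * fst y)) + cmod (snd (snd y) + b * fst y - a*d)))
      + cmod (fst y - c))"
  have "(B \<longlongrightarrow> B (c, a+d, a*d - b*c)) (nhds (c, a+d, a*d - b*c))"
    unfolding B_def by (intro tendsto_intros filterlim_ident)
  moreover have "B (c, a+d, a*d - b*c) = 0" by (simp add: B_def)
  ultimately have "((\<lambda>y. lift_diag b a d y - (a, c, d)) \<longlongrightarrow> 0) (nhds (c, a+d, a*d - b*c))"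
    using Lim_null_comparison[of "\<lambda>y. lift_diag b a d y - (a, c, d)" B] lift_diag_dist
    unfolding B_def by (simp add: always_eventually)
  then show ?thesis by (rule LIM_zero_cancel)
qed

lemma contractive_open: "open {t::c3. contractive (fst t) b (fst (snd t)) (snd (snd t))}"
  unfolding contractive_def hs_sq_def det_sq_def
  by (intro open_Collect_conj open_Collect_less continuous_intros)

lemma pentablock_open: "open pentablock"
proof (rule Topological_Spaces.openI)
  fix x assume "x \<in> pentablock"
  then obtain a b c d where g: "contractive a b c d" and x: "x = (c, a+d, a*d-b*c)"
    unfolding pentablock_iff by blast
  define C where "C = {t::c3. contractive (fst t) b (fst (snd t)) (snd (snd t))}"
  have "\<forall>\<^sub>F y in nhds x. lift_diag b a d y \<in> C"
    using topological_tendstoD[OF lift_diag_tendsto contractive_open] g unfolding x C_def by simp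
  moreover have "y \<in> pentablock" if "lift_diag b a d y \<in> C" for y
    using that lift_diag_preimage[of y b a d] unfolding pentablock_iff C_def by blast
  ultimately have "\<forall>\<^sub>F y in nhds x. y \<in> pentablock" by (rule eventually_mono)
  then show "\<exists>T. open T \<and> x \<in> T \<and> T \<subseteq> pentablock"
    unfolding eventually_nhds by blast
qed

section \<open>Holomorphy\<close>

definition cdiff_at :: "c3 \<Rightarrow> (c3 \<Rightarrow> complex) \<Rightarrow> bool" where
  "cdiff_at x f \<longleftrightarrow> (\<exists>D. (f has_derivative D) (at x) \<and> (\<forall>c v. D (smul3 c v) = c * D v))"

lemma cdiff_const: "cdiff_at x (\<lambda>y. k)"
  unfolding cdiff_at_def by (rule exI[of _ "\<lambda>_. 0"]) simp

lemma cdiff_fst: "cdiff_at x (\<lambda>y. fst y)"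
  unfolding cdiff_at_def
  by (rule exI[of _ "\<lambda>v. fst v"]) (auto simp: smul3_def intro: has_derivative_fst[OF has_derivative_ident])

lemma cdiff_fst_snd: "cdiff_at x (\<lambda>y. fst (snd y))"
  unfolding cdiff_at_def
  by (rule exI[of _ "\<lambda>v. fst (snd v)"])
     (auto simp: smul3_def intro: has_derivative_fst[OF has_derivative_snd[OF has_derivative_ident]])

lemma cdiff_snd_snd: "cdiff_at x (\<lambda>y. snd (snd y))"
  unfolding cdiff_at_def
  by (rule exI[of _ "\<lambda>v. snd (snd v)"])
     (auto simp: smul3_def intro: has_derivative_snd[OF has_derivative_snd[OF has_derivative_ident]])

lemma cdiff_add:
  assumes "cdiff_at x f" "cdiff_at x g"
  shows "cdiff_at x (\<lambda>y. f y + g y)"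
proof -
  obtain D E where "(f has_derivative D) (at x)" "(g has_derivative E) (at x)"
      "\<forall>c v. D (smul3 c v) = c * D v" "\<forall>c v. E (smul3 c v) = c * E v"
    using assms unfolding cdiff_at_def by blast
  then show ?thesis unfolding cdiff_at_def
    by (intro exI[of _ "\<lambda>v. D v + E v"]) (auto intro: has_derivative_add simp: algebra_simps)
qed

lemma cdiff_diff:
  assumes "cdiff_at x f" "cdiff_at x g"
  shows "cdiff_at x (\<lambda>y. f y - g y)"
proof -
  obtain D E where "(f has_derivative D) (at x)" "(g has_derivative E) (at x)"
      "\<forall>c v. D (smul3 c v) = c * D v" "\<forall>c v. E (smul3 c v) = c * E v"
    using assms unfolding cdiff_at_def by blast
  then show ?thesis unfolding cdiff_at_def
    by (intro exI[of _ "\<lambda>v. D v - E v"]) (auto intro: has_derivative_diff simp: algebra_simps)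
qed

lemma cdiff_mult:
  assumes "cdiff_at x f" "cdiff_at x g"
  shows "cdiff_at x (\<lambda>y. f y * g y)"
proof -
  obtain D E where "(f has_derivative D) (at x)" "(g has_derivative E) (at x)"
      "\<forall>c v. D (smul3 c v) = c * D v" "\<forall>c v. E (smul3 c v) = c * E v"
    using assms unfolding cdiff_at_def by blast
  then show ?thesis unfolding cdiff_at_def
    by (intro exI[of _ "\<lambda>v. f x * E v + D v * g x"] conjI has_derivative_mult) (auto simp: algebra_simps)
qed

lemma cdiff_divide:
  assumes "cdiff_at x f" "cdiff_at x g" "g x \<noteq> 0"
  shows "cdiff_at x (\<lambda>y. f y / g y)"
proof -
  obtain D E where "(f has_derivative D) (at x)" "(g has_derivative E) (at x)"
      "\<forall>c v. D (smul3 c v) = c * D v" "\<forall>c v. E (smul3 c v) = c * E v"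
    using assms unfolding cdiff_at_def by blast
  then show ?thesis unfolding cdiff_at_def using assms(3)
    by (intro exI[of _ "\<lambda>h. - f x * (inverse (g x) * E h * inverse (g x)) + D h / g x"]
        conjI has_derivative_divide) (auto simp: algebra_simps)
qed

lemma holo3_on_components:
  assumes "\<And>x. x \<in> S \<Longrightarrow> cdiff_at x f1 \<and> cdiff_at x f2 \<and> cdiff_at x f3"
  shows "holo3_on S (\<lambda>x. (f1 x, f2 x, f3 x))"
  unfolding holo3_on_def
proof
  fix x assume "x \<in> S"
  then obtain D1 D2 D3 where
    d: "(f1 has_derivative D1) (at x)" "(f2 has_derivative D2) (at x)" "(f3 has_derivative D3) (at x)"
    and l: "\<forall>c v. D1 (smul3 c v) = c * D1 v" "\<forall>c v. D2 (smul3 c v) = c * D2 v"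
      "\<forall>c v. D3 (smul3 c v) = c * D3 v"
    using assms unfolding cdiff_at_def by metis
  show "\<exists>D. ((\<lambda>x. (f1 x, f2 x, f3 x)) has_derivative D) (at x) \<and> (\<forall>c v. D (smul3 c v) = smul3 c (D v))"
    by (rule exI[of _ "\<lambda>v. (D1 v, D2 v, D3 v)"])
       (use d l in \<open>auto intro!: has_derivative_Pair simp: smul3_def\<close>)
qed

lemma holo3_on_subset: "holo3_on T f \<Longrightarrow> S \<subseteq> T \<Longrightarrow> holo3_on S f"
  unfolding holo3_on_def by blast

definition fden :: "complex \<Rightarrow> c3 \<Rightarrow> complex" where
  "fden \<alpha> x = 1 - cnj \<alpha> * fst (snd x) + (cnj \<alpha>)^2 * snd (snd x)"

lemma fmap_components: "fmap \<omega> \<eta> \<alpha> = (\<lambda>x.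
      (\<eta> / fden \<alpha> x * (\<omega> * (1 - complex_of_real ((norm \<alpha>)^2)) * fst x),
       \<eta> / fden \<alpha> x * (- 2 * \<alpha> + (1 + complex_of_real ((norm \<alpha>)^2)) * fst (snd x) - 2 * cnj \<alpha> * snd (snd x)),
       \<eta> / fden \<alpha> x * (\<eta> * (\<alpha>^2 - \<alpha> * fst (snd x) + snd (snd x)))))"
  by (rule ext) (simp add: fmap_def fden_def Let_def)

lemma fmap_holo: "holo3_on {x. fden \<alpha> x \<noteq> 0} (fmap \<omega> \<eta> \<alpha>)"
proof -
  have "cdiff_at x (fden \<alpha>)" for x
    unfolding fden_def[abs_def] by (intro cdiff_add cdiff_diff cdiff_mult cdiff_const cdiff_fst_snd cdiff_snd_snd)
  then show ?thesis unfolding fmap_components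
    by (intro holo3_on_components) (auto intro!: cdiff_add cdiff_diff cdiff_mult cdiff_divide
        cdiff_const cdiff_fst cdiff_fst_snd cdiff_snd_snd)
qed

text \<open>On the pentablock the denominator is a product of two disc-automorphism denominators, so it
  is bounded below by \<open>(1 - |\<alpha>|)\<^sup>2\<close>; the bound persists on the closure.\<close>

lemma fden_lower:
  assumes x: "x \<in> pentablock" and a: "cmod \<alpha> < 1"
  shows "(1 - cmod \<alpha>)^2 \<le> cmod (fden \<alpha> x)"
proof -
  obtain c l1 l2 where l: "cmod l1 < 1" "cmod l2 < 1" "x = (c, l1+l2, l1*l2)"
    using pentablock_eigen[OF x] by blast
  have "fden \<alpha> x = (1 - cnj \<alpha> * l1) * (1 - cnj \<alpha> * l2)"
    by (simp add: l(3) fden_def algebra_simps power2_eq_square)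
  moreover have "(1 - cmod \<alpha>) * (1 - cmod \<alpha>) \<le> cmod (1 - cnj \<alpha> * l1) * cmod (1 - cnj \<alpha> * l2)"
    using disc_denom_lower[OF a] l a by (intro mult_mono) auto
  ultimately show ?thesis by (simp add: norm_mult power2_eq_square)
qed

lemma fden_nonzero_closure:
  assumes a: "cmod \<alpha> < 1"
  shows "closure pentablock \<subseteq> {x. fden \<alpha> x \<noteq> 0}"
proof -
  have "continuous_on UNIV (fden \<alpha>)" unfolding fden_def[abs_def] by (intro continuous_intros)
  then have "closure pentablock \<subseteq> {x. (1 - cmod \<alpha>)^2 \<le> cmod (fden \<alpha> x)}"
    by (intro closure_minimal) (use fden_lower a in \<open>auto intro!: closed_Collect_le continuous_intros\<close>)
  moreover have "(1 - cmod \<alpha>)^2 > 0" using a by simp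
  ultimately show ?thesis by force
qed

lemma fden_open: "open {x. fden \<alpha> x \<noteq> 0}"
  unfolding fden_def by (intro open_Collect_neq continuous_intros)

section \<open>The group of automorphisms \<open>f\<^sub>\<omega>\<^sub>\<upsilon>\<close>\<close>

lemma fmap_comp:
  assumes "x \<in> pentablock" "autD_param \<eta>1 \<alpha>1" "autD_param \<eta>2 \<alpha>2"
  shows "fmap \<omega>1 \<eta>1 \<alpha>1 (fmap \<omega>2 \<eta>2 \<alpha>2 x)
       = fmap (\<omega>1 * \<omega>2) (comp_eta \<eta>1 \<alpha>1 \<eta>2 \<alpha>2) (comp_alpha \<eta>1 \<alpha>1 \<eta>2 \<alpha>2) x"
  using pentablock_eigen[OF assms(1)] fmap_comp_eigen[OF assms(2,3)] by metis

lemma fmap_id: "fmap 1 1 0 x = x"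
  by (cases x) (simp add: fmap_def Let_def)

lemma fmap_inverse:
  assumes x: "x \<in> pentablock" and w: "cmod \<omega> = 1" and a: "autD_param \<eta> \<alpha>"
  shows "fmap (cnj \<omega>) (cnj \<eta>) (- \<eta> * \<alpha>) (fmap \<omega> \<eta> \<alpha> x) = x"
    and "fmap \<omega> \<eta> \<alpha> (fmap (cnj \<omega>) (cnj \<eta>) (- \<eta> * \<alpha>) x) = x"
proof -
  have "cnj \<omega> * \<omega> = 1" "\<omega> * cnj \<omega> = 1" using unimodular_mult_cnj[OF w] by (simp_all add: mult.commute)
  then show "fmap (cnj \<omega>) (cnj \<eta>) (- \<eta> * \<alpha>) (fmap \<omega> \<eta> \<alpha> x) = x"
    and "fmap \<omega> \<eta> \<alpha> (fmap (cnj \<omega>) (cnj \<eta>) (- \<eta> * \<alpha>) x) = x"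
    using fmap_comp[OF x inv_param[OF a] a] fmap_comp[OF x a inv_param[OF a]]
      comp_inv_left_param[OF a] comp_inv_right_param[OF a] fmap_id by simp_all
qed

lemma fmap_bij:
  assumes w: "cmod \<omega> = 1" and a: "autD_param \<eta> \<alpha>"
  shows "bij_betw (fmap \<omega> \<eta> \<alpha>) pentablock pentablock"
proof (rule bij_betw_byWitness[where f'="fmap (cnj \<omega>) (cnj \<eta>) (- \<eta> * \<alpha>)"])
  show "\<forall>x\<in>pentablock. fmap (cnj \<omega>) (cnj \<eta>) (- \<eta> * \<alpha>) (fmap \<omega> \<eta> \<alpha> x) = x"
    using fmap_inverse(1)[OF _ w a] by blast
  show "\<forall>x\<in>pentablock. fmap \<omega> \<eta> \<alpha> (fmap (cnj \<omega>) (cnj \<eta>) (- \<eta> * \<alpha>) x) = x"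
    using fmap_inverse(2)[OF _ w a] by blast
  show "fmap \<omega> \<eta> \<alpha> ` pentablock \<subseteq> pentablock"
    using fmap_maps_pentablock[OF _ w a] by blast
  have "cmod (cnj \<omega>) = 1" using w by simp
  then show "fmap (cnj \<omega>) (cnj \<eta>) (- \<eta> * \<alpha>) ` pentablock \<subseteq> pentablock"
    using fmap_maps_pentablock[OF _ _ inv_param[OF a]] by blast
qed

lemma fmap_inv_into:
  assumes x: "x \<in> pentablock" and w: "cmod \<omega> = 1" and a: "autD_param \<eta> \<alpha>"
  shows "inv_into pentablock (fmap \<omega> \<eta> \<alpha>) x = fmap (cnj \<omega>) (cnj \<eta>) (- \<eta> * \<alpha>) x"
proof -
  have "fmap (cnj \<omega>) (cnj \<eta>) (- \<eta> * \<alpha>) x \<in> pentablock"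
    using fmap_maps_pentablock[OF x _ inv_param[OF a]] w by simp
  from bij_betw_inv_into_left[OF fmap_bij[OF w a] this]
  show ?thesis unfolding fmap_inverse(2)[OF x w a] .
qed

lemma fmap_holo_pentablock:
  assumes "autD_param \<eta> \<alpha>"
  shows "holo3_on pentablock (fmap \<omega> \<eta> \<alpha>)"
proof -
  have "pentablock \<subseteq> {x. fden \<alpha> x \<noteq> 0}"
    using closure_subset fden_nonzero_closure assms by (force simp: autD_param_def)
  then show ?thesis by (rule holo3_on_subset[OF fmap_holo])
qed

text \<open>The inverse is holomorphic, because on the open set \<open>pentablock\<close> it agrees with another
  map of the family.\<close>

lemma fmap_inv_holo:
  assumes w: "cmod \<omega> = 1" and a: "autD_param \<eta> \<alpha>"
  shows "holo3_on pentablock (inv_into pentablock (fmap \<omega> \<eta> \<alpha>))"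
  unfolding holo3_on_def
proof
  fix x assume x: "x \<in> pentablock"
  obtain D where D: "(fmap (cnj \<omega>) (cnj \<eta>) (- \<eta> * \<alpha>) has_derivative D) (at x)"
      "\<forall>c v. D (smul3 c v) = smul3 c (D v)"
    using fmap_holo_pentablock[OF inv_param[OF a]] x unfolding holo3_on_def by blast
  have "(inv_into pentablock (fmap \<omega> \<eta> \<alpha>) has_derivative D) (at x)"
    by (rule has_derivative_transform_within_open[OF D(1) pentablock_open x])
       (use fmap_inv_into w a in auto)
  then show "\<exists>D. (inv_into pentablock (fmap \<omega> \<eta> \<alpha>) has_derivative D) (at x)
      \<and> (\<forall>c v. D (smul3 c v) = smul3 c (D v))" using D(2) by blast
qed

lemma fmap_automorphism:
  assumes "cmod \<omega> = 1" "autD_param \<eta> \<alpha>"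
  shows "is_aut3 pentablock (fmap \<omega> \<eta> \<alpha>)"
  unfolding is_aut3_def using fmap_bij fmap_holo_pentablock fmap_inv_holo assms by blast

lemma fmap_holomorphic_extension:
  assumes "autD_param \<eta> \<alpha>"
  shows "\<exists>U g. open U \<and> closure pentablock \<subseteq> U \<and> holo3_on U g \<and>
           (\<forall>x\<in>pentablock. g x = fmap \<omega> \<eta> \<alpha> x)"
  using fden_open fden_nonzero_closure[of \<alpha>] fmap_holo[of \<alpha> \<omega> \<eta>] assms
  by (intro exI[of _ "{x. fden \<alpha> x \<noteq> 0}"] exI[of _ "fmap \<omega> \<eta> \<alpha>"]) (simp add: autD_param_def)

text \<open>The composition and inverse laws, stated for arbitrary parameters of \<open>\<upsilon>1 \<circ> \<upsilon>2\<close> and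
  \<open>\<upsilon>\<inverse>\<^sup>1\<close>; these are unique by \<open>moeb_param_unique\<close>.\<close>

lemma fmap_composition_law:
  assumes a: "autD_param \<eta>1 \<alpha>1" "autD_param \<eta>2 \<alpha>2" "autD_param \<eta> \<alpha>"
    and h: "\<forall>z. cmod z < 1 \<longrightarrow> moeb \<eta> \<alpha> z = moeb \<eta>1 \<alpha>1 (moeb \<eta>2 \<alpha>2 z)"
    and x: "x \<in> pentablock"
  shows "fmap \<omega>1 \<eta>1 \<alpha>1 (fmap \<omega>2 \<eta>2 \<alpha>2 x) = fmap (\<omega>1 * \<omega>2) \<eta> \<alpha> x"
proof -
  have "\<eta> = comp_eta \<eta>1 \<alpha>1 \<eta>2 \<alpha>2 \<and> \<alpha> = comp_alpha \<eta>1 \<alpha>1 \<eta>2 \<alpha>2"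
    using moeb_param_unique[OF a(3) comp_param[OF a(1,2)]] h moeb_comp[OF a(1,2)] by simp
  then show ?thesis using fmap_comp[OF x a(1,2)] by simp
qed

lemma fmap_inverse_law:
  assumes w: "cmod \<omega> = 1" and a: "autD_param \<eta> \<alpha>" "autD_param \<eta>' \<alpha>'"
    and h: "\<forall>z. cmod z < 1 \<longrightarrow> moeb \<eta>' \<alpha>' (moeb \<eta> \<alpha> z) = z"
    and x: "x \<in> pentablock"
  shows "inv_into pentablock (fmap \<omega> \<eta> \<alpha>) x = fmap (cnj \<omega>) \<eta>' \<alpha>' x"
proof -
  have "moeb \<eta>' \<alpha>' z = moeb (cnj \<eta>) (- \<eta> * \<alpha>) z" if z: "cmod z < 1" for z
    using h moeb_maps_disc[OF inv_param[OF a(1)] z] moeb_inverse(2)[OF a(1) z] by metis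
  then have "\<eta>' = cnj \<eta> \<and> \<alpha>' = - \<eta> * \<alpha>" using moeb_param_unique[OF a(2) inv_param[OF a(1)]] by blast
  then show ?thesis using fmap_inv_into[OF x w a(1)] by simp
qed

theorem theorem7p1:
  shows
  "(\<forall>\<omega> \<eta> \<alpha>. norm \<omega> = 1 \<and> autD_param \<eta> \<alpha> \<longrightarrow>
       is_aut3 pentablock (fmap \<omega> \<eta> \<alpha>) \<and>
       (\<exists>U g. open U \<and> closure pentablock \<subseteq> U \<and> holo3_on U g \<and>
              (\<forall>x\<in>pentablock. g x = fmap \<omega> \<eta> \<alpha> x)))
   \<and>
   (\<forall>\<omega>1 \<eta>1 \<alpha>1 \<omega>2 \<eta>2 \<alpha>2.
       norm \<omega>1 = 1 \<and> autD_param \<eta>1 \<alpha>1 \<and> norm \<omega>2 = 1 \<and> autD_param \<eta>2 \<alpha>2 \<longrightarrow>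
       (\<exists>\<eta> \<alpha>. autD_param \<eta> \<alpha> \<and>
          (\<forall>z. norm z < 1 \<longrightarrow> moeb \<eta> \<alpha> z = moeb \<eta>1 \<alpha>1 (moeb \<eta>2 \<alpha>2 z))) \<and>
       (\<forall>\<eta> \<alpha>. autD_param \<eta> \<alpha> \<and>
          (\<forall>z. norm z < 1 \<longrightarrow> moeb \<eta> \<alpha> z = moeb \<eta>1 \<alpha>1 (moeb \<eta>2 \<alpha>2 z)) \<longrightarrow>
          (\<forall>x\<in>pentablock. fmap \<omega>1 \<eta>1 \<alpha>1 (fmap \<omega>2 \<eta>2 \<alpha>2 x) = fmap (\<omega>1 * \<omega>2) \<eta> \<alpha> x)))
   \<and>
   (\<forall>\<omega> \<eta> \<alpha>. norm \<omega> = 1 \<and> autD_param \<eta> \<alpha> \<longrightarrow>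
       (\<exists>\<eta>' \<alpha>'. autD_param \<eta>' \<alpha>' \<and>
          (\<forall>z. norm z < 1 \<longrightarrow> moeb \<eta>' \<alpha>' (moeb \<eta> \<alpha> z) = z)) \<and>
       (\<forall>\<eta>' \<alpha>'. autD_param \<eta>' \<alpha>' \<and>
          (\<forall>z. norm z < 1 \<longrightarrow> moeb \<eta>' \<alpha>' (moeb \<eta> \<alpha> z) = z) \<longrightarrow>
          (\<forall>x\<in>pentablock. inv_into pentablock (fmap \<omega> \<eta> \<alpha>) x = fmap (cnj \<omega>) \<eta>' \<alpha>' x)))
   \<and>
   (\<forall>x\<in>pentablock. fmap 1 1 0 x = x)"
proof (intro conjI allI impI ballI; (elim conjE)?)
  fix \<omega> \<eta> \<alpha> :: complex assume w: "norm \<omega> = 1" and a: "autD_param \<eta> \<alpha>"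
  show "is_aut3 pentablock (fmap \<omega> \<eta> \<alpha>)" using fmap_automorphism[OF w a] .
  show "\<exists>U g. open U \<and> closure pentablock \<subseteq> U \<and> holo3_on U g \<and> (\<forall>x\<in>pentablock. g x = fmap \<omega> \<eta> \<alpha> x)"
    using fmap_holomorphic_extension[OF a] .
  show "\<exists>\<eta>' \<alpha>'. autD_param \<eta>' \<alpha>' \<and> (\<forall>z. norm z < 1 \<longrightarrow> moeb \<eta>' \<alpha>' (moeb \<eta> \<alpha> z) = z)"
    using inv_param[OF a] moeb_inverse(1)[OF a] by blast
  fix \<eta>' \<alpha>' x assume "autD_param \<eta>' \<alpha>'" "\<forall>z. norm z < 1 \<longrightarrow> moeb \<eta>' \<alpha>' (moeb \<eta> \<alpha> z) = z"
    "x \<in> pentablock"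
  then show "inv_into pentablock (fmap \<omega> \<eta> \<alpha>) x = fmap (cnj \<omega>) \<eta>' \<alpha>' x"
    using fmap_inverse_law[OF w a] by blast
next
  fix \<omega>1 \<eta>1 \<alpha>1 \<omega>2 \<eta>2 \<alpha>2 :: complex assume a: "autD_param \<eta>1 \<alpha>1" "autD_param \<eta>2 \<alpha>2"
  show "\<exists>\<eta> \<alpha>. autD_param \<eta> \<alpha> \<and> (\<forall>z. norm z < 1 \<longrightarrow> moeb \<eta> \<alpha> z = moeb \<eta>1 \<alpha>1 (moeb \<eta>2 \<alpha>2 z))"
    using comp_param[OF a] moeb_comp[OF a] by blast
  fix \<eta> \<alpha> x assume "autD_param \<eta> \<alpha>" "\<forall>z. norm z < 1 \<longrightarrow> moeb \<eta> \<alpha> z = moeb \<eta>1 \<alpha>1 (moeb \<eta>2 \<alpha>2 z)"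
    "x \<in> pentablock"
  then show "fmap \<omega>1 \<eta>1 \<alpha>1 (fmap \<omega>2 \<eta>2 \<alpha>2 x) = fmap (\<omega>1 * \<omega>2) \<eta> \<alpha> x"
    using fmap_composition_law[OF a] by blast
next
  show "fmap 1 1 0 x = x" for x by (rule fmap_id)
qed

end
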